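(* Let $k>1$, let $f$ be a positive function on $\mathbb{R}$, differentiable on $[0,1]$, and define $g(R)=\dfrac{k-1}{\frac{k-1}{k}-R}$ for $R\neq\frac{k-1}{k}$. Consider the planar system $$\frac{dI}{d\tau}=I\,[f(R)(1-I-R)-k],\qquad \frac{dR}{d\tau}=(k-1)I-R.$$ If $f(R)>g(R)$ for some $R\in\left[0,\frac{k-1}{k}\right)$, then the system has at least one endemic equilibrium point $(I^*,R^* )$ with $R^*\in\left(R,\frac{k-1}{k}\right)$ and $I^*\in\left(\frac{R}{k-1},\frac1k\right)$. In particular, if $f(0)>k$, there exists at least one endemic equilibrium.
   Context: An endemic equilibrium is an equilibrium point $(I^*,R^* )$ of the system with $I^*>0$. *)

theory Defs
  imports "HOL-Analysis.Analysis"
begin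

definition gfun :: "real \<Rightarrow> real \<Rightarrow> real" where
  "gfun k R = (k - 1) / ((k - 1) / k - R)"

definition dI :: "(real \<Rightarrow> real) \<Rightarrow> real \<Rightarrow> real \<Rightarrow> real \<Rightarrow> real" where
  "dI f k I R = I * (f R * (1 - I - R) - k)"

definition dR :: "real \<Rightarrow> real \<Rightarrow> real \<Rightarrow> real" where
  "dR k I R = (k - 1) * I - R"

definition is_equilibrium :: "(real \<Rightarrow> real) \<Rightarrow> real \<Rightarrow> real \<Rightarrow> real \<Rightarrow> bool" where
  "is_equilibrium f k I R \<longleftrightarrow> dI f k I R = 0 \<and> dR k I R = 0"

definition is_endemic_equilibrium :: "(real \<Rightarrow> real) \<Rightarrow> real \<Rightarrow> real \<Rightarrow> real \<Rightarrow> bool" where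
  "is_endemic_equilibrium f k I R \<longleftrightarrow> is_equilibrium f k I R \<and> I > 0"

end

theory Submission
  imports Defs
begin

text \<open>Eliminating I = R/(k-1) turns the equilibrium equations with I \<noteq> 0 into
  f(R) ((k-1)/k - R) = k - 1. At a point R where f(R) > g(R) the left-hand side exceeds
  k - 1, while at R = (k-1)/k it vanishes, so the intermediate value theorem yields a root
  strictly in between.\<close>

lemma IVT2'_strict:
  fixes f :: "'a::linear_continuum_topology \<Rightarrow> 'b::linorder_topology"
  assumes "f b < y" "y < f a" "a \<le> b" "continuous_on {a..b} f"
  shows "\<exists>x. a < x \<and> x < b \<and> f x = y"
proof -
  obtain x where "a \<le> x" "x \<le> b" "f x = y"
    using IVT2'[of f b y a] assms by fastforce
  moreover have "x \<noteq> a" "x \<noteq> b"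
    using assms \<open>f x = y\<close> by auto
  ultimately show ?thesis
    by (auto simp: order_less_le)
qed

lemma endemic_equilibrium_of_root:
  assumes "k > 1" "R > 0" "f R * ((k - 1) / k - R) = k - 1"
  shows "is_endemic_equilibrium f k (R / (k - 1)) R"
proof -
  have "1 - R / (k - 1) - R = k / (k - 1) * ((k - 1) / k - R)"
    using assms(1) by (simp add: field_simps)
  then have "f R * (1 - R / (k - 1) - R) = k"
    using assms by (simp add: field_simps)
  then show ?thesis
    using assms(1,2) by (simp add: is_endemic_equilibrium_def is_equilibrium_def dI_def dR_def)
qed

lemma gfun_less_iff:
  assumes "R < (k - 1) / k"
  shows "gfun k R < y \<longleftrightarrow> k - 1 < y * ((k - 1) / k - R)"
  using assms by (simp add: gfun_def divide_less_eq mult.commute)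

lemma endemic_equilibrium_beyond:
  fixes f :: "real \<Rightarrow> real"
  assumes k: "k > 1"
    and R: "0 \<le> R" "R < (k - 1) / k"
    and cont: "continuous_on {R..(k - 1) / k} f"
    and above: "f R > gfun k R"
  shows "\<exists>Is Rs. is_endemic_equilibrium f k Is Rs
           \<and> R < Rs \<and> Rs < (k - 1) / k
           \<and> R / (k - 1) < Is \<and> Is < 1 / k"
proof -
  define c where "c = (k - 1) / k"
  have "continuous_on {R..c} (\<lambda>x. f x * (c - x))"
    using cont unfolding c_def by (intro continuous_intros)
  moreover have "k - 1 < f R * (c - R)"
    using above R gfun_less_iff unfolding c_def by blast
  ultimately obtain Rs where Rs: "R < Rs" "Rs < c" "f Rs * (c - Rs) = k - 1"
    using IVT2'_strict[of "\<lambda>x. f x * (c - x)" c "k - 1" R] k R by (auto simp: c_def)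
  have "is_endemic_equilibrium f k (Rs / (k - 1)) Rs"
    using endemic_equilibrium_of_root[OF k] Rs R unfolding c_def by simp
  moreover have "R / (k - 1) < Rs / (k - 1)"
    using Rs k by (simp add: divide_strict_right_mono)
  moreover have "Rs / (k - 1) < 1 / k"
    using Rs k by (simp add: c_def field_simps)
  ultimately show ?thesis
    using Rs unfolding c_def by blast
qed

theorem theorem2:
  fixes f :: "real \<Rightarrow> real" and k :: real
  assumes "k > 1"
    and "\<And>x. f x > 0"
    and "f differentiable_on {0..1}"
  shows "(\<forall>R. 0 \<le> R \<and> R < (k - 1) / k \<and> f R > gfun k R \<longrightarrow>
            (\<exists>Is Rs. is_endemic_equilibrium f k Is Rs
                \<and> R < Rs \<and> Rs < (k - 1) / k
                \<and> R / (k - 1) < Is \<and> Is < 1 / k))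
         \<and> (f 0 > k \<longrightarrow> (\<exists>Is Rs. is_endemic_equilibrium f k Is Rs))"
proof -
  have beyond: "\<exists>Is Rs. is_endemic_equilibrium f k Is Rs
                  \<and> R < Rs \<and> Rs < (k - 1) / k
                  \<and> R / (k - 1) < Is \<and> Is < 1 / k"
    if "0 \<le> R" "R < (k - 1) / k" "f R > gfun k R" for R
  proof -
    have "{R..(k - 1) / k} \<subseteq> {0..1}"
      using that(1) assms(1) by auto
    then have "continuous_on {R..(k - 1) / k} f"
      using assms(3) differentiable_imp_continuous_on continuous_on_subset by blast
    then show ?thesis
      using endemic_equilibrium_beyond assms(1) that by blast
  qed
  have "gfun k 0 = k" "0 < (k - 1) / k"
    using assms(1) by (simp_all add: gfun_def)
  then show ?thesis
    using beyond[of 0] beyond by auto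
qed

end
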